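(* Let $P$ be a dcpo such that $\Sigma P$ is well-filtered. The following are equivalent: (1) $\Sigma P$ is locally compact. (2) $\mathsf{K}(\Sigma P)$ is a continuous semilattice, and the upper Vietoris topology and the Scott topology on $\mathsf{K}(\Sigma P)$ coincide. (3) $\mathsf{K}(\Sigma P)$ is a continuous semilattice, and $\Sigma P$ has property Q. (4) $\mathsf{K}(\Sigma P)$ is a continuous semilattice. (5) $\Sigma P$ is core compact.
   Context: A dcpo is a poset in which every directed subset has a supremum. For a poset $Q$, the Scott topology consists of upper sets $U$ such that every directed $D$ whose supremum exists and lies in $U$ meets $U$; $\Sigma Q$ is $Q$ with its Scott topology. For a $T_0$ space $X$: specialization order $x\le y$ iff $x\in\overline{\{y\}}$; saturated = upper set; $\mathsf{K}(X)$ is the set of nonempty compact saturated subsets ordered by reverse inclusion (suprema of families, when they exist, are intersections, which exist iff the intersection is in $\mathsf{K}(X)$); $a\ll b$ in a poset means for every directed $D$ with existing $\bigvee D\ge b$ some $d\in D$ has $d\ge a$; $\mathsf{K}(X)$ is a continuous semilattice if it is directed complete and each $K$ is the directed supremum of $\{L: L\ll K\}$. Upper Vietoris topology on $\mathsf{K}(X)$: base $\{\Box U\}$ with $\Box U=\{K: K\subseteq U\}$, $U$ open. $X$ is well-filtered if for every open $U$ and every family $\mathcal K\subseteq \mathsf{K}(X)$ filtered under inclusion, $\bigcap\mathcal K\subseteq U$ implies some $K\in\mathcal K$ is contained in $U$. Property Q: for all $K_1,K_2\in\mathsf{K}(X)$, $K_1\ll K_2$ iff $K_2\subseteq\operatorname{int}K_1$.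 Locally compact: each point has a neighborhood base of compact sets. Core compact: the lattice of open sets is a continuous lattice. *)

theory Defs
  imports "HOL-Analysis.Analysis"
begin

definition directed_in :: "'a set \<Rightarrow> ('a \<Rightarrow> 'a \<Rightarrow> bool) \<Rightarrow> 'a set \<Rightarrow> bool" where
  "directed_in S le D \<longleftrightarrow> D \<subseteq> S \<and> D \<noteq> {} \<and>
     (\<forall>x\<in>D. \<forall>y\<in>D. \<exists>z\<in>D. le x z \<and> le y z)"

definition is_sup_in :: "'a set \<Rightarrow> ('a \<Rightarrow> 'a \<Rightarrow> bool) \<Rightarrow> 'a set \<Rightarrow> 'a \<Rightarrow> bool" where
  "is_sup_in S le D s \<longleftrightarrow> s \<in> S \<and> (\<forall>d\<in>D. le d s) \<and>
     (\<forall>u\<in>S. (\<forall>d\<in>D. le d u) \<longrightarrow> le s u)"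

definition dcpo_on :: "'a set \<Rightarrow> ('a \<Rightarrow> 'a \<Rightarrow> bool) \<Rightarrow> bool" where
  "dcpo_on S le \<longleftrightarrow> (\<forall>D. directed_in S le D \<longrightarrow> (\<exists>s. is_sup_in S le D s))"

definition scott_open :: "'a set \<Rightarrow> ('a \<Rightarrow> 'a \<Rightarrow> bool) \<Rightarrow> 'a set \<Rightarrow> bool" where
  "scott_open S le U \<longleftrightarrow> U \<subseteq> S \<and> (\<forall>x\<in>U. \<forall>y\<in>S. le x y \<longrightarrow> y \<in> U) \<and>
     (\<forall>D s. directed_in S le D \<and> is_sup_in S le D s \<and> s \<in> U \<longrightarrow> D \<inter> U \<noteq> {})"

definition scott_topology :: "'a set \<Rightarrow> ('a \<Rightarrow> 'a \<Rightarrow> bool) \<Rightarrow> 'a topology" where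
  "scott_topology S le = topology (scott_open S le)"

definition way_below_in :: "'a set \<Rightarrow> ('a \<Rightarrow> 'a \<Rightarrow> bool) \<Rightarrow> 'a \<Rightarrow> 'a \<Rightarrow> bool" where
  "way_below_in S le a b \<longleftrightarrow>
     (\<forall>D s. directed_in S le D \<and> is_sup_in S le D s \<and> le b s \<longrightarrow> (\<exists>d\<in>D. le a d))"

definition Sigma_space :: "('a::order) topology" where
  "Sigma_space = scott_topology UNIV (\<le>)"

text \<open>Saturated = upper set in the specialization order (x \<le> y iff x \<in> closure {y}).\<close>
definition saturated_in :: "'a topology \<Rightarrow> 'a set \<Rightarrow> bool" where
  "saturated_in X A \<longleftrightarrow> A \<subseteq> topspace X \<and>
     (\<forall>x\<in>A. \<forall>y\<in>topspace X. x \<in> X closure_of {y} \<longrightarrow> y \<in> A)"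

definition KX :: "'a topology \<Rightarrow> 'a set set" where
  "KX X = {K. K \<noteq> {} \<and> compactin X K \<and> saturated_in X K}"

definition rev_incl :: "'a set \<Rightarrow> 'a set \<Rightarrow> bool" where
  "rev_incl K L \<longleftrightarrow> L \<subseteq> K"

definition filtered_family :: "'a set set \<Rightarrow> bool" where
  "filtered_family \<K> \<longleftrightarrow> \<K> \<noteq> {} \<and>
     (\<forall>K1\<in>\<K>. \<forall>K2\<in>\<K>. \<exists>K3\<in>\<K>. K3 \<subseteq> K1 \<and> K3 \<subseteq> K2)"

definition well_filtered :: "'a topology \<Rightarrow> bool" where
  "well_filtered X \<longleftrightarrow>
     (\<forall>U \<K>. openin X U \<and> \<K> \<subseteq> KX X \<and> filtered_family \<K> \<and> \<Inter>\<K> \<subseteq> U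
        \<longrightarrow> (\<exists>K\<in>\<K>. K \<subseteq> U))"

definition continuous_semilattice_on :: "'a set \<Rightarrow> ('a \<Rightarrow> 'a \<Rightarrow> bool) \<Rightarrow> bool" where
  "continuous_semilattice_on S le \<longleftrightarrow> dcpo_on S le \<and>
     (\<forall>x\<in>S. directed_in S le {y\<in>S. way_below_in S le y x} \<and>
             is_sup_in S le {y\<in>S. way_below_in S le y x} x)"

definition Box_set :: "'a topology \<Rightarrow> 'a set \<Rightarrow> 'a set set" where
  "Box_set X U = {K\<in>KX X. K \<subseteq> U}"

definition upper_vietoris :: "'a topology \<Rightarrow> 'a set topology" where
  "upper_vietoris X = topology_generated_by {Box_set X U | U. openin X U}"

definition property_Q :: "'a topology \<Rightarrow> bool" where
  "property_Q X \<longleftrightarrow> (\<forall>K1\<in>KX X. \<forall>K2\<in>KX X.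
     way_below_in (KX X) rev_incl K1 K2 \<longleftrightarrow> K2 \<subseteq> X interior_of K1)"

definition locally_compact_nb :: "'a topology \<Rightarrow> bool" where
  "locally_compact_nb X \<longleftrightarrow> neighbourhood_base_of (compactin X) X"

text \<open>Continuous lattice (the lattice of opens is complete, so only the approximation
  property is required): every element is the supremum of the elements way below it.\<close>
definition core_compact :: "'a topology \<Rightarrow> bool" where
  "core_compact X \<longleftrightarrow>
     (let Opens = {U. openin X U} in
      \<forall>U\<in>Opens. is_sup_in Opens (\<subseteq>) {V\<in>Opens. way_below_in Opens (\<subseteq>) V U} U)"

end

theory Submission
  imports Defs
begin

text \<open>
  Except for (4) \<Longrightarrow> (1), every implication holds in an arbitrary well-filtered space X.
  There directed suprema in K(X) are intersections, so K \<subseteq> int L forces L \<lless> K;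
  local compactness provides enough such L (the compact saturated neighbourhoods of K) to make
  K(X) continuous, to give property Q, and to write every Scott open subset of K(X) as a union
  of boxes of interiors. Conversely, in a core compact space interpolation yields chains
  U \<ggreater> V 1 \<ggreater> V 2 \<ggreater> ..., and well-filteredness makes their intersections compact.
  For the Scott space of a poset, if L \<lless> \<up>x in K(\<Sigma>P) then {y. L \<lless> \<up>y} is a Scott open
  neighbourhood of x inside L, because \<up>(\<Squnion>D) is the directed supremum of the \<up>d and
  \<lless> interpolates.
\<close>

section \<open>Scott topologies\<close>

lemma istopology_scott_open: "istopology (scott_open S le)"
  unfolding istopology_def
proof (intro conjI allI impI)
  fix U V assume U: "scott_open S le U" and V: "scott_open S le V"
  show "scott_open S le (U \<inter> V)"
    unfolding scott_open_def
  proof (intro conjI allI impI ballI)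
    show "U \<inter> V \<subseteq> S"
      using U unfolding scott_open_def by auto
  next
    fix x y assume "x \<in> U \<inter> V" "y \<in> S" "le x y"
    then show "y \<in> U \<inter> V"
      using U V unfolding scott_open_def by blast
  next
    fix D s assume D: "directed_in S le D \<and> is_sup_in S le D s \<and> s \<in> U \<inter> V"
    then obtain d1 d2 where "d1 \<in> D" "d1 \<in> U" "d2 \<in> D" "d2 \<in> V"
      using U V unfolding scott_open_def by blast
    moreover from this obtain d where "d \<in> D" "le d1 d" "le d2 d"
      using D unfolding directed_in_def by blast
    moreover have "d \<in> S"
      using D \<open>d \<in> D\<close> unfolding directed_in_def by blast
    ultimately have "d \<in> U \<inter> V"
      using U V unfolding scott_open_def by blast
    with \<open>d \<in> D\<close> show "D \<inter> (U \<inter> V) \<noteq> {}"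
      by blast
  qed
next
  fix \<U> assume \<U>: "\<forall>U\<in>\<U>. scott_open S le U"
  show "scott_open S le (\<Union>\<U>)"
    unfolding scott_open_def
  proof (intro conjI allI impI ballI)
    show "\<Union>\<U> \<subseteq> S"
      using \<U> unfolding scott_open_def by auto
  next
    fix x y assume "x \<in> \<Union>\<U>" "y \<in> S" "le x y"
    then show "y \<in> \<Union>\<U>"
      using \<U> unfolding scott_open_def by blast
  next
    fix D s assume D: "directed_in S le D \<and> is_sup_in S le D s \<and> s \<in> \<Union>\<U>"
    then obtain U where "U \<in> \<U>" "s \<in> U"
      by blast
    then have "D \<inter> U \<noteq> {}"
      using D \<U> unfolding scott_open_def by blast
    with \<open>U \<in> \<U>\<close> show "D \<inter> \<Union>\<U> \<noteq> {}"
      by blast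
  qed
qed

lemma openin_scott_topology [simp]: "openin (scott_topology S le) U \<longleftrightarrow> scott_open S le U"
  by (simp add: scott_topology_def istopology_scott_open)

section \<open>The way-below relation\<close>

locale preordered_set =
  fixes S :: "'a set" and le :: "'a \<Rightarrow> 'a \<Rightarrow> bool"
  assumes refl_le: "x \<in> S \<Longrightarrow> le x x"
    and trans_le: "\<lbrakk>x \<in> S; y \<in> S; z \<in> S; le x y; le y z\<rbrakk> \<Longrightarrow> le x z"
begin

lemma way_below_imp_le:
  assumes "way_below_in S le a b" "b \<in> S"
  shows "le a b"
proof -
  have "directed_in S le {b}" "is_sup_in S le {b} b"
    using assms(2) refl_le unfolding directed_in_def is_sup_in_def by auto
  then show ?thesis
    using assms refl_le unfolding way_below_in_def by blast
qed

lemma way_below_le_trans: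
  assumes "way_below_in S le a b" "le b c" "b \<in> S" "c \<in> S"
  shows "way_below_in S le a c"
  unfolding way_below_in_def
proof (intro allI impI)
  fix D s assume D: "directed_in S le D \<and> is_sup_in S le D s \<and> le c s"
  then have "s \<in> S"
    unfolding is_sup_in_def by blast
  with assms D have "le b s"
    using trans_le[of b c s] by blast
  with assms(1) D show "\<exists>d\<in>D. le a d"
    unfolding way_below_in_def by blast
qed

lemma le_way_below_trans:
  assumes "le a b" "way_below_in S le b c" "a \<in> S" "b \<in> S"
  shows "way_below_in S le a c"
  unfolding way_below_in_def
proof (intro allI impI)
  fix D s assume D: "directed_in S le D \<and> is_sup_in S le D s \<and> le c s"
  then obtain d where "d \<in> D" "le b d"
    using assms(2) unfolding way_below_in_def by blast
  moreover from this have "d \<in> S"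
    using D unfolding directed_in_def by blast
  ultimately show "\<exists>d\<in>D. le a d"
    using assms trans_le[of a b d] by blast
qed

lemma directed_finite_upper_bound:
  assumes "directed_in S le D" "finite F" "F \<subseteq> D"
  shows "\<exists>d\<in>D. \<forall>x\<in>F. le x d"
  using assms(2,3)
proof (induction F rule: finite_induct)
  case empty
  then show ?case
    using assms(1) unfolding directed_in_def by blast
next
  case (insert x F)
  then obtain d where d: "d \<in> D" "\<forall>y\<in>F. le y d"
    by blast
  moreover obtain e where e: "e \<in> D" "le x e" "le d e"
    using assms(1) d(1) insert.prems unfolding directed_in_def by blast
  moreover have "D \<subseteq> S"
    using assms(1) unfolding directed_in_def by blast
  ultimately have "\<forall>y\<in>F. le y e"
    using insert.prems trans_le by blast
  with e show ?case
    by blast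
qed

definition way_below_set :: "'a \<Rightarrow> 'a set" where
  "way_below_set x = {y\<in>S. way_below_in S le y x}"

end

locale continuous_preordered_set = preordered_set +
  assumes approximation: "x \<in> S \<Longrightarrow>
    directed_in S le {y\<in>S. way_below_in S le y x} \<and> is_sup_in S le {y\<in>S. way_below_in S le y x} x"
begin

lemma directed_way_below_set: "x \<in> S \<Longrightarrow> directed_in S le (way_below_set x)"
  using approximation unfolding way_below_set_def by blast

lemma is_sup_way_below_set: "x \<in> S \<Longrightarrow> is_sup_in S le (way_below_set x) x"
  using approximation unfolding way_below_set_def by blast

lemma directed_way_below_of_way_below:
  assumes "c \<in> S"
  shows "directed_in S le (\<Union>(way_below_set ` way_below_set c))"
  unfolding directed_in_def
proof (intro conjI ballI)
  show "\<Union>(way_below_set ` way_below_set c) \<subseteq> S"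
    unfolding way_below_set_def by blast
  obtain z where z: "z \<in> way_below_set c"
    using directed_way_below_set[OF assms] unfolding directed_in_def by blast
  then have "z \<in> S"
    unfolding way_below_set_def by blast
  then obtain y where "y \<in> way_below_set z"
    using directed_way_below_set unfolding directed_in_def by blast
  then show "\<Union>(way_below_set ` way_below_set c) \<noteq> {}"
    using z by blast
next
  fix y1 y2
  assume "y1 \<in> \<Union>(way_below_set ` way_below_set c)" "y2 \<in> \<Union>(way_below_set ` way_below_set c)"
  then obtain z1 z2 where z: "z1 \<in> way_below_set c" "z2 \<in> way_below_set c"
    and y: "y1 \<in> way_below_set z1" "y2 \<in> way_below_set z2"
    by blast
  obtain z where "z \<in> way_below_set c" "le z1 z" "le z2 z"
    using directed_way_below_set[OF assms] z unfolding directed_in_def by blast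
  moreover have S: "z \<in> S" "z1 \<in> S" "z2 \<in> S" "y1 \<in> S" "y2 \<in> S"
    using calculation z y unfolding way_below_set_def by auto
  ultimately have "way_below_in S le y1 z" "way_below_in S le y2 z"
    using y way_below_le_trans unfolding way_below_set_def by blast+
  moreover have "directed_in S le (way_below_set z)" "is_sup_in S le (way_below_set z) z"
    using directed_way_below_set is_sup_way_below_set S(1) by auto
  ultimately obtain v1 v2 where v: "v1 \<in> way_below_set z" "le y1 v1" "v2 \<in> way_below_set z" "le y2 v2"
    using refl_le[OF S(1)] unfolding way_below_in_def by meson
  with \<open>directed_in S le (way_below_set z)\<close> obtain v where "v \<in> way_below_set z" "le v1 v" "le v2 v"
    unfolding directed_in_def by blast
  moreover have "v \<in> S" "v1 \<in> S" "v2 \<in> S"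
    using calculation v unfolding way_below_set_def by auto
  ultimately have "le y1 v" "le y2 v"
    using trans_le[of y1 v1 v] trans_le[of y2 v2 v] S v by auto
  then show "\<exists>v\<in>\<Union>(way_below_set ` way_below_set c). le y1 v \<and> le y2 v"
    using \<open>v \<in> way_below_set z\<close> \<open>z \<in> way_below_set c\<close> by blast
qed

lemma is_sup_way_below_of_way_below:
  assumes "c \<in> S"
  shows "is_sup_in S le (\<Union>(way_below_set ` way_below_set c)) c"
  unfolding is_sup_in_def
proof (intro conjI ballI impI)
  fix y assume "y \<in> \<Union>(way_below_set ` way_below_set c)"
  then obtain z where "z \<in> S" "y \<in> S" "way_below_in S le y z" "way_below_in S le z c"
    unfolding way_below_set_def by blast
  moreover from this have "le y z" "le z c"
    using assms way_below_imp_le by auto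
  ultimately show "le y c"
    using assms trans_le[of y z c] by auto
next
  fix u assume u: "u \<in> S" "\<forall>y\<in>\<Union>(way_below_set ` way_below_set c). le y u"
  have "le z u" if "z \<in> way_below_set c" for z
  proof -
    have "z \<in> S"
      using that unfolding way_below_set_def by blast
    then show ?thesis
      using is_sup_way_below_set[OF \<open>z \<in> S\<close>] u that unfolding is_sup_in_def by blast
  qed
  then show "le c u"
    using is_sup_way_below_set[OF assms] u unfolding is_sup_in_def by blast
qed (fact assms)

lemma way_below_interpolation:
  assumes "way_below_in S le a c" "a \<in> S" "c \<in> S"
  shows "\<exists>b\<in>S. way_below_in S le a b \<and> way_below_in S le b c"
proof -
  obtain y where "y \<in> \<Union>(way_below_set ` way_below_set c)" "le a y"
    using assms directed_way_below_of_way_below is_sup_way_below_of_way_below refl_le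
    unfolding way_below_in_def by blast
  then obtain b where "b \<in> way_below_set c" "y \<in> way_below_set b" "le a y"
    by blast
  then show ?thesis
    using assms(2) le_way_below_trans unfolding way_below_set_def by blast
qed

end

section \<open>Saturated sets\<close>

definition saturation :: "'a topology \<Rightarrow> 'a set \<Rightarrow> 'a set" where
  "saturation X A = {y \<in> topspace X. \<exists>x\<in>A. x \<in> X closure_of {y}}"

lemma in_closure_of_singleton:
  "x \<in> X closure_of {y} \<longleftrightarrow> x \<in> topspace X \<and> (\<forall>U. openin X U \<and> x \<in> U \<longrightarrow> y \<in> U)"
  by (auto simp: in_closure_of)

lemma saturated_in_openin: "openin X U \<Longrightarrow> saturated_in X U"
  by (auto simp: saturated_in_def in_closure_of_singleton openin_subset)

lemma saturated_in_saturation: "saturated_in X (saturation X A)"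
  unfolding saturated_in_def saturation_def in_closure_of_singleton by blast

lemma subset_saturation: "A \<subseteq> topspace X \<Longrightarrow> A \<subseteq> saturation X A"
  unfolding saturation_def in_closure_of_singleton by blast

lemma saturation_subset: "saturated_in X W \<Longrightarrow> A \<subseteq> W \<Longrightarrow> saturation X A \<subseteq> W"
  unfolding saturated_in_def saturation_def by blast

lemma saturation_mono: "A \<subseteq> B \<Longrightarrow> saturation X A \<subseteq> saturation X B"
  unfolding saturation_def by blast

lemma compactin_saturation:
  assumes "compactin X C"
  shows "compactin X (saturation X C)"
  unfolding compactin_def
proof (intro conjI allI impI)
  show "saturation X C \<subseteq> topspace X"
    unfolding saturation_def by blast
next
  fix \<U> assume \<U>: "(\<forall>U\<in>\<U>. openin X U) \<and> saturation X C \<subseteq> \<Union>\<U>"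
  have "C \<subseteq> saturation X C"
    by (rule subset_saturation[OF compactin_subset_topspace[OF assms]])
  with \<U> have "C \<subseteq> \<Union>\<U>"
    by (rule_tac subset_trans) auto
  with \<U> obtain \<F> where \<F>: "finite \<F>" "\<F> \<subseteq> \<U>" "C \<subseteq> \<Union>\<F>"
    using assms unfolding compactin_def by blast
  have "saturated_in X (\<Union>\<F>)"
    using \<F>(2) \<U> by (intro saturated_in_openin openin_Union) blast
  with \<F> show "\<exists>\<F>. finite \<F> \<and> \<F> \<subseteq> \<U> \<and> saturation X C \<subseteq> \<Union>\<F>"
    using saturation_subset[of X "\<Union>\<F>" C] by blast
qed

lemma saturation_in_KX:
  assumes "compactin X C" "C \<noteq> {}"
  shows "saturation X C \<in> KX X"
proof -
  have "C \<subseteq> saturation X C"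
    by (rule subset_saturation[OF compactin_subset_topspace[OF assms(1)]])
  then show ?thesis
    unfolding KX_def using assms compactin_saturation saturated_in_saturation by blast
qed

section \<open>Compact saturated sets of a well-filtered space\<close>

lemma well_filteredD:
  assumes "well_filtered X" "openin X U" "\<K> \<subseteq> KX X" "filtered_family \<K>" "\<Inter>\<K> \<subseteq> U"
  obtains K where "K \<in> \<K>" "K \<subseteq> U"
  using assms unfolding well_filtered_def by blast

lemma Inter_filtered_in_KX:
  assumes wf: "well_filtered X" and \<K>: "\<K> \<subseteq> KX X" "filtered_family \<K>"
  shows "\<Inter>\<K> \<in> KX X"
proof -
  have KX: "K \<noteq> {}" "compactin X K" "saturated_in X K" if "K \<in> \<K>" for K
    using that \<K>(1) unfolding KX_def by auto
  obtain K0 where "K0 \<in> \<K>"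
    using \<K>(2) unfolding filtered_family_def by blast
  then have top: "\<Inter>\<K> \<subseteq> topspace X"
    using Inter_lower compactin_subset_topspace[OF KX(2)] by blast
  have "\<Inter>\<K> \<noteq> {}"
  proof
    assume "\<Inter>\<K> = {}"
    then obtain K where "K \<in> \<K>" "K \<subseteq> {}"
      by (rule well_filteredD[OF wf openin_empty \<K> equalityD1])
    then show False
      using KX(1) by blast
  qed
  moreover have "compactin X (\<Inter>\<K>)"
    unfolding compactin_def
  proof (intro conjI allI impI)
    fix \<U> assume \<U>: "(\<forall>U\<in>\<U>. openin X U) \<and> \<Inter>\<K> \<subseteq> \<Union>\<U>"
    then have "openin X (\<Union>\<U>)"
      by (intro openin_Union) auto
    then obtain K where K: "K \<in> \<K>" "K \<subseteq> \<Union>\<U>"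
      using well_filteredD[OF wf _ \<K>] \<U> by blast
    with \<U> obtain \<F> where "finite \<F>" "\<F> \<subseteq> \<U>" "K \<subseteq> \<Union>\<F>"
      using KX(2)[OF K(1)] unfolding compactin_def by blast
    with K(1) show "\<exists>\<F>. finite \<F> \<and> \<F> \<subseteq> \<U> \<and> \<Inter>\<K> \<subseteq> \<Union>\<F>"
      by blast
  qed (fact top)
  moreover have "saturated_in X (\<Inter>\<K>)"
    using top KX(3) unfolding saturated_in_def by blast
  ultimately show ?thesis
    unfolding KX_def by blast
qed

lemma directed_in_KX_iff: "directed_in (KX X) rev_incl D \<longleftrightarrow> D \<subseteq> KX X \<and> filtered_family D"
  unfolding directed_in_def filtered_family_def rev_incl_def by blast

lemma is_sup_in_KX_iff:
  assumes "well_filtered X" "directed_in (KX X) rev_incl D"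
  shows "is_sup_in (KX X) rev_incl D s \<longleftrightarrow> s = \<Inter>D"
proof
  have "\<Inter>D \<in> KX X"
    using Inter_filtered_in_KX[OF assms(1)] assms(2) unfolding directed_in_KX_iff by blast
  then show "is_sup_in (KX X) rev_incl D s \<Longrightarrow> s = \<Inter>D"
    unfolding is_sup_in_def rev_incl_def by blast
  show "s = \<Inter>D \<Longrightarrow> is_sup_in (KX X) rev_incl D s"
    using \<open>\<Inter>D \<in> KX X\<close> unfolding is_sup_in_def rev_incl_def by blast
qed

lemma dcpo_on_KX: "well_filtered X \<Longrightarrow> dcpo_on (KX X) rev_incl"
  unfolding dcpo_on_def using is_sup_in_KX_iff by blast

lemma continuous_preordered_set_KX:
  assumes "continuous_semilattice_on (KX X) rev_incl"
  shows "continuous_preordered_set (KX X) rev_incl"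
proof (intro continuous_preordered_set.intro continuous_preordered_set_axioms.intro)
  show "preordered_set (KX X) rev_incl"
    by unfold_locales (auto simp: rev_incl_def)
qed (use assms in \<open>simp add: continuous_semilattice_on_def\<close>)

lemma directed_KX_sup_subset_openin:
  assumes "well_filtered X" "directed_in (KX X) rev_incl D" "is_sup_in (KX X) rev_incl D s"
    and "openin X U" "s \<subseteq> U"
  shows "\<exists>d\<in>D. d \<subseteq> U"
proof -
  have "s = \<Inter>D"
    using is_sup_in_KX_iff[OF assms(1,2)] assms(3) by blast
  moreover have "D \<subseteq> KX X" "filtered_family D"
    using assms(2) unfolding directed_in_KX_iff by auto
  ultimately obtain d where "d \<in> D" "d \<subseteq> U"
    using assms(5) well_filteredD[OF assms(1,4)] by metis
  then show ?thesis
    by blast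
qed

lemma way_below_KX_if_subset_interior:
  assumes "well_filtered X" "K2 \<subseteq> X interior_of K1"
  shows "way_below_in (KX X) rev_incl K1 K2"
  unfolding way_below_in_def
proof (intro allI impI)
  fix D s assume D: "directed_in (KX X) rev_incl D \<and> is_sup_in (KX X) rev_incl D s \<and> rev_incl K2 s"
  then have "s \<subseteq> X interior_of K1"
    using assms(2) unfolding rev_incl_def by blast
  then obtain d where "d \<in> D" "d \<subseteq> X interior_of K1"
    using directed_KX_sup_subset_openin[OF assms(1) _ _ openin_interior_of] D by blast
  then show "\<exists>d\<in>D. rev_incl K1 d"
    using interior_of_subset[of X K1] unfolding rev_incl_def by blast
qed

lemma scott_open_Box_set:
  assumes "well_filtered X" "openin X U"
  shows "scott_open (KX X) rev_incl (Box_set X U)"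
  unfolding scott_open_def
proof (intro conjI allI impI ballI)
  fix D s assume D: "directed_in (KX X) rev_incl D \<and> is_sup_in (KX X) rev_incl D s \<and> s \<in> Box_set X U"
  then obtain d where "d \<in> D" "d \<subseteq> U"
    using directed_KX_sup_subset_openin[OF assms(1) _ _ assms(2)] unfolding Box_set_def by blast
  moreover from this have "d \<in> KX X"
    using D unfolding directed_in_def by blast
  ultimately show "D \<inter> Box_set X U \<noteq> {}"
    unfolding Box_set_def by blast
qed (auto simp: Box_set_def rev_incl_def)

section \<open>Locally compact well-filtered spaces\<close>

lemma locally_compact_KX_between:
  assumes lc: "locally_compact_nb X" and K: "K \<in> KX X" and W: "openin X W" "K \<subseteq> W"
  obtains L where "L \<in> KX X" "K \<subseteq> X interior_of L" "L \<subseteq> W"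
proof -
  have "\<forall>k\<in>K. \<exists>U V. openin X U \<and> compactin X V \<and> k \<in> U \<and> U \<subseteq> V \<and> V \<subseteq> W"
    using lc W unfolding locally_compact_nb_def neighbourhood_base_of by blast
  then obtain U V where UV: "\<And>k. k \<in> K \<Longrightarrow>
      openin X (U k) \<and> compactin X (V k) \<and> k \<in> U k \<and> U k \<subseteq> V k \<and> V k \<subseteq> W"
    by metis
  have "compactin X K" "K \<noteq> {}"
    using K unfolding KX_def by auto
  moreover have "K \<subseteq> \<Union>(U ` K)" "\<forall>T\<in>U ` K. openin X T"
    using UV by blast+
  ultimately obtain \<G> where "finite \<G>" "\<G> \<subseteq> U ` K" "K \<subseteq> \<Union>\<G>"
    unfolding compactin_def by meson
  then obtain F where F: "F \<subseteq> K" "finite F" "K \<subseteq> \<Union>(U ` F)"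
    using finite_subset_image by metis
  define C where "C = \<Union>(V ` F)"
  have "compactin X C"
    unfolding C_def using F UV by (intro compactin_Union) auto
  have "\<Union>(U ` F) \<subseteq> C"
    unfolding C_def using F UV by blast
  moreover have "openin X (\<Union>(U ` F))"
    using F UV by (intro openin_Union) auto
  ultimately have "\<Union>(U ` F) \<subseteq> X interior_of C"
    by (rule interior_of_maximal)
  also have "\<dots> \<subseteq> X interior_of (saturation X C)"
    by (intro interior_of_mono subset_saturation compactin_subset_topspace) fact
  finally have "K \<subseteq> X interior_of (saturation X C)"
    using F(3) by blast
  moreover have "C \<noteq> {}"
    using F \<open>K \<noteq> {}\<close> \<open>\<Union>(U ` F) \<subseteq> X interior_of C\<close> interior_of_subset[of X C] by blast
  then have "saturation X C \<in> KX X"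
    by (rule saturation_in_KX[OF \<open>compactin X C\<close>])
  moreover have "saturation X C \<subseteq> W"
    unfolding C_def using F UV by (intro saturation_subset saturated_in_openin W) blast
  ultimately show thesis
    using that by blast
qed

definition compact_neighbourhoods :: "'a topology \<Rightarrow> 'a set \<Rightarrow> 'a set set" where
  "compact_neighbourhoods X K = {L \<in> KX X. K \<subseteq> X interior_of L}"

lemma directed_compact_neighbourhoods:
  assumes lc: "locally_compact_nb X" and K: "K \<in> KX X"
  shows "directed_in (KX X) rev_incl (compact_neighbourhoods X K)"
  unfolding directed_in_def
proof (intro conjI ballI)
  show "compact_neighbourhoods X K \<subseteq> KX X"
    unfolding compact_neighbourhoods_def by blast
  have "K \<subseteq> topspace X"
    using K unfolding KX_def saturated_in_def by blast
  then obtain L where "L \<in> KX X" "K \<subseteq> X interior_of L"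
    using locally_compact_KX_between[OF lc K openin_topspace] by metis
  then show "compact_neighbourhoods X K \<noteq> {}"
    unfolding compact_neighbourhoods_def by blast
next
  fix A B assume "A \<in> compact_neighbourhoods X K" "B \<in> compact_neighbourhoods X K"
  then have "K \<subseteq> X interior_of A \<inter> X interior_of B"
    unfolding compact_neighbourhoods_def by auto
  moreover have "openin X (X interior_of A \<inter> X interior_of B)"
    by (simp add: openin_Int)
  ultimately obtain L where "L \<in> KX X" "K \<subseteq> X interior_of L" "L \<subseteq> X interior_of A \<inter> X interior_of B"
    using locally_compact_KX_between[OF lc K] by metis
  then have "L \<in> compact_neighbourhoods X K" "rev_incl A L" "rev_incl B L"
    using interior_of_subset[of X A] interior_of_subset[of X B]
    unfolding compact_neighbourhoods_def rev_incl_def by auto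
  then show "\<exists>L\<in>compact_neighbourhoods X K. rev_incl A L \<and> rev_incl B L"
    by blast
qed

lemma is_sup_compact_neighbourhoods:
  assumes lc: "locally_compact_nb X" and K: "K \<in> KX X"
  shows "is_sup_in (KX X) rev_incl (compact_neighbourhoods X K) K"
  unfolding is_sup_in_def
proof (intro conjI ballI impI)
  fix L assume "L \<in> compact_neighbourhoods X K"
  then show "rev_incl L K"
    using interior_of_subset[of X L] unfolding compact_neighbourhoods_def rev_incl_def by blast
next
  fix M assume M: "M \<in> KX X" "\<forall>L\<in>compact_neighbourhoods X K. rev_incl L M"
  show "rev_incl K M"
    unfolding rev_incl_def
  proof
    fix y assume "y \<in> M"
    then have "y \<in> topspace X"
      using M(1) unfolding KX_def saturated_in_def by blast
    then have y: "y \<in> X closure_of {y}"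
      using closure_of_subset[of "{y}" X] by blast
    show "y \<in> K"
    proof (rule ccontr)
      assume "y \<notin> K"
      then have "K \<subseteq> topspace X - X closure_of {y}"
        using K \<open>y \<in> topspace X\<close> unfolding KX_def saturated_in_def by blast
      moreover have "openin X (topspace X - X closure_of {y})"
        by (simp add: openin_diff)
      ultimately obtain L where "L \<in> KX X" "K \<subseteq> X interior_of L" "L \<subseteq> topspace X - X closure_of {y}"
        using locally_compact_KX_between[OF lc K] by metis
      then show False
        using M(2) \<open>y \<in> M\<close> y unfolding compact_neighbourhoods_def rev_incl_def by blast
    qed
  qed
qed (fact K)

lemma way_below_KX_iff_subset_interior:
  assumes wf: "well_filtered X" and lc: "locally_compact_nb X" and K2: "K2 \<in> KX X"
  shows "way_below_in (KX X) rev_incl K1 K2 \<longleftrightarrow> K2 \<subseteq> X interior_of K1"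
proof
  assume "way_below_in (KX X) rev_incl K1 K2"
  moreover have "rev_incl K2 K2"
    by (simp add: rev_incl_def)
  ultimately obtain L where "L \<in> compact_neighbourhoods X K2" "rev_incl K1 L"
    using directed_compact_neighbourhoods[OF lc K2] is_sup_compact_neighbourhoods[OF lc K2]
    unfolding way_below_in_def by blast
  then show "K2 \<subseteq> X interior_of K1"
    using interior_of_mono[of L K1 X] unfolding compact_neighbourhoods_def rev_incl_def by blast
qed (rule way_below_KX_if_subset_interior[OF wf])

lemma property_Q_if_locally_compact:
  "well_filtered X \<Longrightarrow> locally_compact_nb X \<Longrightarrow> property_Q X"
  unfolding property_Q_def using way_below_KX_iff_subset_interior by blast

lemma continuous_semilattice_KX_if_locally_compact:
  assumes wf: "well_filtered X" and lc: "locally_compact_nb X"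
  shows "continuous_semilattice_on (KX X) rev_incl"
proof -
  have "{L \<in> KX X. way_below_in (KX X) rev_incl L K} = compact_neighbourhoods X K" if "K \<in> KX X" for K
    using way_below_KX_iff_subset_interior[OF wf lc that] unfolding compact_neighbourhoods_def by blast
  then show ?thesis
    unfolding continuous_semilattice_on_def
    using dcpo_on_KX[OF wf] directed_compact_neighbourhoods[OF lc] is_sup_compact_neighbourhoods[OF lc]
    by simp
qed

lemma scott_open_KX_eq_Union_Box_set:
  assumes lc: "locally_compact_nb X" and \<U>: "scott_open (KX X) rev_incl \<U>"
  shows "\<U> = (\<Union>L\<in>\<U>. Box_set X (X interior_of L))"
proof (intro equalityI subsetI)
  fix K assume "K \<in> \<U>"
  then have K: "K \<in> KX X"
    using \<U> unfolding scott_open_def by blast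
  then obtain L where "L \<in> compact_neighbourhoods X K" "L \<in> \<U>"
    using \<U> \<open>K \<in> \<U>\<close> directed_compact_neighbourhoods[OF lc K] is_sup_compact_neighbourhoods[OF lc K]
    unfolding scott_open_def by blast
  with K show "K \<in> (\<Union>L\<in>\<U>. Box_set X (X interior_of L))"
    unfolding compact_neighbourhoods_def Box_set_def by blast
next
  fix M assume "M \<in> (\<Union>L\<in>\<U>. Box_set X (X interior_of L))"
  then obtain L where "L \<in> \<U>" "M \<in> KX X" "M \<subseteq> X interior_of L"
    unfolding Box_set_def by blast
  moreover from this have "rev_incl L M"
    using interior_of_subset[of X L] unfolding rev_incl_def by blast
  ultimately show "M \<in> \<U>"
    using \<U> unfolding scott_open_def by blast
qed

lemma upper_vietoris_eq_scott_topology: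
  assumes wf: "well_filtered X" and lc: "locally_compact_nb X"
  shows "upper_vietoris X = scott_topology (KX X) rev_incl"
proof -
  let ?B = "{Box_set X U | U. openin X U}"
  have "generate_topology_on ?B \<U> \<longleftrightarrow> scott_open (KX X) rev_incl \<U>" for \<U>
  proof
    assume gen: "generate_topology_on ?B \<U>"
    have "scott_open (KX X) rev_incl S" if "S \<in> ?B" for S
      using that scott_open_Box_set[OF wf] by auto
    then show "scott_open (KX X) rev_incl \<U>"
      by (rule generate_topology_on_coarsest[OF istopology_scott_open _ gen])
  next
    assume \<U>: "scott_open (KX X) rev_incl \<U>"
    have "generate_topology_on ?B (\<Union>L\<in>\<U>. Box_set X (X interior_of L))"
      by (intro generate_topology_on.UN generate_topology_on.Basis) (blast intro: openin_interior_of)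
    then show "generate_topology_on ?B \<U>"
      using scott_open_KX_eq_Union_Box_set[OF lc \<U>] by simp
  qed
  then show ?thesis
    unfolding upper_vietoris_def by (simp add: topology_eq openin_topology_generated_by_iff)
qed

section \<open>Core compact spaces\<close>

abbreviation way_below_opens :: "'a topology \<Rightarrow> 'a set \<Rightarrow> 'a set \<Rightarrow> bool" where
  "way_below_opens X V U \<equiv> way_below_in {U. openin X U} (\<subseteq>) V U"

lemma preordered_set_opens: "preordered_set {U. openin X U} (\<subseteq>)"
  by unfold_locales auto

lemma way_below_opens_imp_subset: "way_below_opens X V U \<Longrightarrow> openin X U \<Longrightarrow> V \<subseteq> U"
  using preordered_set.way_below_imp_le[OF preordered_set_opens] by blast

lemma is_sup_in_opens_iff:
  assumes "D \<subseteq> {U. openin X U}"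
  shows "is_sup_in {U. openin X U} (\<subseteq>) D s \<longleftrightarrow> s = \<Union>D"
proof -
  have "openin X (\<Union>D)"
    using assms by (intro openin_Union) auto
  then show ?thesis
    unfolding is_sup_in_def by blast
qed

lemma way_below_opens_if_subset_compactin:
  assumes "compactin X C" "V \<subseteq> C" "C \<subseteq> U"
  shows "way_below_opens X V U"
  unfolding way_below_in_def
proof (intro allI impI, elim conjE)
  fix D s
  assume D: "directed_in {U. openin X U} (\<subseteq>) D" and s: "is_sup_in {U. openin X U} (\<subseteq>) D s" "U \<subseteq> s"
  have "D \<subseteq> {U. openin X U}"
    using D unfolding directed_in_def by auto
  then have "s = \<Union>D"
    using s(1) is_sup_in_opens_iff by blast
  then have "C \<subseteq> \<Union>D"
    using assms(3) s(2) by blast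
  moreover have "\<forall>T\<in>D. openin X T"
    using \<open>D \<subseteq> {U. openin X U}\<close> by auto
  ultimately obtain F where F: "finite F" "F \<subseteq> D" "C \<subseteq> \<Union>F"
    using assms(1) unfolding compactin_def by meson
  then obtain d where "d \<in> D" "\<forall>f\<in>F. f \<subseteq> d"
    using preordered_set.directed_finite_upper_bound[OF preordered_set_opens D] by meson
  with F(3) assms(2) show "\<exists>d\<in>D. V \<subseteq> d"
    by blast
qed

lemma core_compact_if_locally_compact:
  assumes lc: "locally_compact_nb X"
  shows "core_compact X"
  unfolding core_compact_def Let_def is_sup_in_def
proof (intro ballI conjI impI)
  fix U assume U: "U \<in> {U. openin X U}"
  then show "U \<in> {U. openin X U}" .
  fix V assume "V \<in> {V \<in> {U. openin X U}. way_below_opens X V U}"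
  with U show "V \<subseteq> U"
    using way_below_opens_imp_subset by auto
next
  fix U W assume U: "U \<in> {U. openin X U}"
    and W: "\<forall>V\<in>{V \<in> {U. openin X U}. way_below_opens X V U}. V \<subseteq> W"
  show "U \<subseteq> W"
  proof
    fix x assume "x \<in> U"
    moreover have "openin X U"
      using U by simp
    ultimately obtain V C where "openin X V" "compactin X C" "x \<in> V" "V \<subseteq> C" "C \<subseteq> U"
      using lc unfolding locally_compact_nb_def neighbourhood_base_of by meson
    moreover from this have "way_below_opens X V U"
      by (intro way_below_opens_if_subset_compactin)
    ultimately show "x \<in> W"
      using W by blast
  qed
qed

lemma way_below_opens_Un:
  assumes "way_below_opens X A U" "way_below_opens X B U"
  shows "way_below_opens X (A \<union> B) U"
  unfolding way_below_in_def
proof (intro allI impI, elim conjE)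
  fix D s
  assume D: "directed_in {U. openin X U} (\<subseteq>) D" and s: "is_sup_in {U. openin X U} (\<subseteq>) D s" "U \<subseteq> s"
  obtain d1 d2 where "d1 \<in> D" "A \<subseteq> d1" "d2 \<in> D" "B \<subseteq> d2"
    using assms D s unfolding way_below_in_def by meson
  moreover from this obtain d where "d \<in> D" "d1 \<subseteq> d" "d2 \<subseteq> d"
    using D unfolding directed_in_def by meson
  ultimately show "\<exists>d\<in>D. A \<union> B \<subseteq> d"
    by blast
qed

lemma directed_way_below_opens:
  "directed_in {U. openin X U} (\<subseteq>) {V \<in> {U. openin X U}. way_below_opens X V U}"
  unfolding directed_in_def
proof (intro conjI ballI)
  have "way_below_opens X {} U"
    unfolding way_below_in_def directed_in_def by auto
  then show "{V \<in> {U. openin X U}. way_below_opens X V U} \<noteq> {}"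
    by auto
next
  fix A B
  assume "A \<in> {V \<in> {U. openin X U}. way_below_opens X V U}" "B \<in> {V \<in> {U. openin X U}. way_below_opens X V U}"
  then have "A \<union> B \<in> {V \<in> {U. openin X U}. way_below_opens X V U}"
    by (auto intro: way_below_opens_Un)
  then show "\<exists>C\<in>{V \<in> {U. openin X U}. way_below_opens X V U}. A \<subseteq> C \<and> B \<subseteq> C"
    by blast
qed auto

lemma continuous_preordered_set_opens:
  assumes "core_compact X"
  shows "continuous_preordered_set {U. openin X U} (\<subseteq>)"
proof (intro continuous_preordered_set.intro continuous_preordered_set_axioms.intro preordered_set_opens)
  fix U assume "U \<in> {U. openin X U}"
  then show "directed_in {U. openin X U} (\<subseteq>) {V \<in> {U. openin X U}. way_below_opens X V U} \<and>
      is_sup_in {U. openin X U} (\<subseteq>) {V \<in> {U. openin X U}. way_below_opens X V U} U"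
    using assms directed_way_below_opens unfolding core_compact_def Let_def by blast
qed

lemma way_below_opens_imp_finite_subcover:
  assumes "way_below_opens X V W" "\<forall>U\<in>\<U>. openin X U" "W \<subseteq> \<Union>\<U>"
  obtains \<F> where "finite \<F>" "\<F> \<subseteq> \<U>" "V \<subseteq> \<Union>\<F>"
proof -
  define D where "D = {\<Union>\<F> | \<F>. finite \<F> \<and> \<F> \<subseteq> \<U>}"
  have D_opens: "D \<subseteq> {U. openin X U}"
    unfolding D_def using assms(2) by (auto intro!: openin_Union)
  have "directed_in {U. openin X U} (\<subseteq>) D"
    unfolding directed_in_def
  proof (intro conjI ballI)
    have "\<Union>{} \<in> D"
      unfolding D_def by blast
    then show "D \<noteq> {}"
      by blast
  next
    fix A B assume "A \<in> D" "B \<in> D"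
    then obtain \<F>1 \<F>2 where "A = \<Union>\<F>1" "finite \<F>1" "\<F>1 \<subseteq> \<U>" "B = \<Union>\<F>2" "finite \<F>2" "\<F>2 \<subseteq> \<U>"
      unfolding D_def by blast
    then have "\<Union>(\<F>1 \<union> \<F>2) \<in> D" "A \<subseteq> \<Union>(\<F>1 \<union> \<F>2)" "B \<subseteq> \<Union>(\<F>1 \<union> \<F>2)"
      unfolding D_def by blast+
    then show "\<exists>C\<in>D. A \<subseteq> C \<and> B \<subseteq> C"
      by blast
  qed (fact D_opens)
  moreover have "U \<in> D" if "U \<in> \<U>" for U
    unfolding D_def using that by (intro CollectI exI[of _ "{U}"]) auto
  then have "\<Union>D = \<Union>\<U>"
    unfolding D_def by blast
  then have "is_sup_in {U. openin X U} (\<subseteq>) D (\<Union>\<U>)"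
    using is_sup_in_opens_iff[OF D_opens] by simp
  ultimately obtain d where "d \<in> D" "V \<subseteq> d"
    using assms(1,3) unfolding way_below_in_def by blast
  then show thesis
    using that unfolding D_def by blast
qed

lemma maximal_open_excluding_chain:
  assumes chain: "\<And>n. way_below_opens X (V (Suc n)) (V n)"
    and G: "openin X G" "\<And>n. \<not> V n \<subseteq> G"
  obtains Q where "openin X Q" "G \<subseteq> Q" "\<And>n. \<not> V n \<subseteq> Q"
    and "\<And>W. openin X W \<Longrightarrow> \<not> W \<subseteq> Q \<Longrightarrow> \<exists>n. V n \<subseteq> Q \<union> W"
proof -
  define \<A> where "\<A> = {Q. openin X Q \<and> G \<subseteq> Q \<and> (\<forall>n. \<not> V n \<subseteq> Q)}"
  have "\<forall>\<C>\<in>chains \<A>. \<exists>B\<in>\<A>. \<forall>Q\<in>\<C>. Q \<subseteq> B"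
  proof
    fix \<C> assume "\<C> \<in> chains \<A>"
    then have \<C>: "\<C> \<subseteq> \<A>" "\<forall>Q\<in>\<C>. \<forall>Q'\<in>\<C>. Q \<subseteq> Q' \<or> Q' \<subseteq> Q"
      unfolding chains_def chain_subset_def by blast+
    then have G_sub: "\<forall>Q\<in>\<C>. G \<subseteq> Q"
      unfolding \<A>_def by blast
    have D_opens: "insert G \<C> \<subseteq> {U. openin X U}"
      using G(1) \<C>(1) unfolding \<A>_def by auto
    have dir: "directed_in {U. openin X U} (\<subseteq>) (insert G \<C>)"
      unfolding directed_in_def using D_opens \<C>(2) G_sub by (metis insert_iff insert_not_empty order_refl)
    have sup: "is_sup_in {U. openin X U} (\<subseteq>) (insert G \<C>) (\<Union>(insert G \<C>))"
      using is_sup_in_opens_iff[OF D_opens] by simp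
    have "\<not> V n \<subseteq> \<Union>(insert G \<C>)" for n
    proof
      assume "V n \<subseteq> \<Union>(insert G \<C>)"
      then obtain d where "d \<in> insert G \<C>" "V (Suc n) \<subseteq> d"
        using chain[of n] dir sup unfolding way_below_in_def by blast
      then show False
        using G(2)[of "Suc n"] \<C>(1) unfolding \<A>_def by blast
    qed
    moreover have "openin X (\<Union>(insert G \<C>))"
      using D_opens by (intro openin_Union) auto
    ultimately have "\<Union>(insert G \<C>) \<in> \<A>"
      unfolding \<A>_def by blast
    then show "\<exists>B\<in>\<A>. \<forall>Q\<in>\<C>. Q \<subseteq> B"
      by (intro bexI[of _ "\<Union>(insert G \<C>)"]) auto
  qed
  from Zorn_Lemma2[OF this] obtain Q where Q: "Q \<in> \<A>" and max: "\<forall>Q'\<in>\<A>. Q \<subseteq> Q' \<longrightarrow> Q' = Q"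
    by blast
  show thesis
  proof (rule that)
    show "openin X Q" "G \<subseteq> Q" "\<not> V n \<subseteq> Q" for n
      using Q unfolding \<A>_def by auto
    fix W assume W: "openin X W" "\<not> W \<subseteq> Q"
    show "\<exists>n. V n \<subseteq> Q \<union> W"
    proof (rule ccontr)
      assume "\<nexists>n. V n \<subseteq> Q \<union> W"
      with Q W(1) have "Q \<union> W \<in> \<A>"
        unfolding \<A>_def by auto
      with max W(2) show False
        by blast
    qed
  qed
qed

lemma compactin_tail_outside_maximal_open:
  assumes V: "decseq V" "\<And>n. openin X (V n)"
    and maximal: "\<And>W. openin X W \<Longrightarrow> \<not> W \<subseteq> Q \<Longrightarrow> \<exists>n. V n \<subseteq> Q \<union> W"
    and c: "\<And>n. c n \<in> V n - Q"
  shows "compactin X (c ` {m..})"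
  unfolding compactin_def
proof (intro conjI allI impI)
  show "c ` {m..} \<subseteq> topspace X"
    using c openin_subset[OF V(2)] by blast
  fix \<U> assume \<U>: "(\<forall>U\<in>\<U>. openin X U) \<and> c ` {m..} \<subseteq> \<Union>\<U>"
  then have "\<forall>k\<in>{m..}. \<exists>U\<in>\<U>. c k \<in> U"
    by blast
  then obtain h where h: "\<And>k. k \<ge> m \<Longrightarrow> h k \<in> \<U> \<and> c k \<in> h k"
    by (metis atLeast_iff)
  then have "openin X (h m)" "\<not> h m \<subseteq> Q"
    using \<U> c[of m] by auto
  \<comment> \<open>so a single member of the cover catches the whole tail beyond n\<close>
  then obtain n where n: "V n \<subseteq> Q \<union> h m"
    using maximal by blast
  have "c ` {m..} \<subseteq> \<Union>(h ` {m..max m n})"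
  proof
    fix y assume "y \<in> c ` {m..}"
    then obtain k where k: "m \<le> k" "y = c k"
      by auto
    show "y \<in> \<Union>(h ` {m..max m n})"
    proof (cases "k \<le> max m n")
      case True
      then show ?thesis
        using h[of k] k by auto
    next
      case False
      then have "n \<le> k"
        by simp
      then have "c k \<in> V n"
        using c[of k] decseqD[OF V(1), of n k] by blast
      then have "c k \<in> h m"
        using n c[of k] by blast
      then show ?thesis
        using k by auto
    qed
  qed
  moreover have "h ` {m..max m n} \<subseteq> \<U>"
    using h by auto
  ultimately show "\<exists>\<F>. finite \<F> \<and> \<F> \<subseteq> \<U> \<and> c ` {m..} \<subseteq> \<Union>\<F>"
    by blast
qed

text \<open>
  If no V n lies in G, take a maximal open Q \<supseteq> G containing no V n and points
  c n \<in> V n - Q. Maximality makes the tails of c compact, and well-filteredness applied to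
  their saturations yields a point of \<Inter>(range V) outside Q \<supseteq> G.
\<close>
lemma well_filtered_way_below_chain_subset_openin:
  assumes wf: "well_filtered X"
    and V: "\<And>n. openin X (V n)" "\<And>n. way_below_opens X (V (Suc n)) (V n)"
    and G: "openin X G" "\<Inter>(range V) \<subseteq> G"
  shows "\<exists>n. V n \<subseteq> G"
proof (rule ccontr)
  assume "\<nexists>n. V n \<subseteq> G"
  then obtain Q where Q: "openin X Q" "G \<subseteq> Q" "\<And>n. \<not> V n \<subseteq> Q"
    and maximal: "\<And>W. openin X W \<Longrightarrow> \<not> W \<subseteq> Q \<Longrightarrow> \<exists>n. V n \<subseteq> Q \<union> W"
    using maximal_open_excluding_chain[of X V, OF V(2) G(1)] by metis
  have dec: "decseq V"
    by (intro decseq_SucI way_below_opens_imp_subset[OF V(2) V(1)])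
  have "\<forall>n. \<exists>y. y \<in> V n - Q"
    using Q(3) by blast
  then obtain c where c: "\<And>n. c n \<in> V n - Q"
    by metis
  define T where "T m = saturation X (c ` {m..})" for m
  have T_KX: "T m \<in> KX X" for m
    unfolding T_def
    by (intro saturation_in_KX compactin_tail_outside_maximal_open[OF dec V(1) maximal c]) auto
  have c_T: "c m \<in> T m" for m
  proof -
    have "c ` {m..} \<subseteq> topspace X"
      using compactin_tail_outside_maximal_open[OF dec V(1) maximal c] compactin_subset_topspace by blast
    then show ?thesis
      unfolding T_def using subset_saturation by blast
  qed
  have T_V: "T m \<subseteq> V m" for m
    unfolding T_def
    using c decseqD[OF dec] by (intro saturation_subset saturated_in_openin V(1)) fastforce
  have filtered: "filtered_family (range T)"
    unfolding filtered_family_def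
  proof (intro conjI ballI)
    fix A B assume "A \<in> range T" "B \<in> range T"
    then obtain i j where "A = T i" "B = T j"
      by blast
    moreover have "T (max i j) \<subseteq> T i" "T (max i j) \<subseteq> T j"
      unfolding T_def by (intro saturation_mono image_mono; auto)+
    ultimately show "\<exists>C\<in>range T. C \<subseteq> A \<and> C \<subseteq> B"
      by blast
  qed auto
  have "\<not> \<Inter>(range T) \<subseteq> Q"
  proof
    assume "\<Inter>(range T) \<subseteq> Q"
    moreover have "range T \<subseteq> KX X"
      using T_KX by blast
    ultimately obtain m where "T m \<subseteq> Q"
      using well_filteredD[OF wf Q(1) _ filtered] by blast
    then show False
      using c_T[of m] c[of m] by blast
  qed
  then obtain y where "y \<in> \<Inter>(range T)" "y \<notin> Q"
    by blast
  then have "y \<in> \<Inter>(range V)"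
    using T_V by blast
  with \<open>y \<notin> Q\<close> G(2) Q(2) show False
    by blast
qed

lemma compactin_Inter_way_below_chain:
  assumes wf: "well_filtered X"
    and V: "\<And>n. openin X (V n)" "\<And>n. way_below_opens X (V (Suc n)) (V n)"
  shows "compactin X (\<Inter>(range V))"
  unfolding compactin_def
proof (intro conjI allI impI)
  show "\<Inter>(range V) \<subseteq> topspace X"
    using openin_subset[OF V(1)[of 0]] by blast
  fix \<U> assume \<U>: "(\<forall>U\<in>\<U>. openin X U) \<and> \<Inter>(range V) \<subseteq> \<Union>\<U>"
  then have "openin X (\<Union>\<U>)"
    by (intro openin_Union) auto
  then obtain n where "V n \<subseteq> \<Union>\<U>"
    using well_filtered_way_below_chain_subset_openin[of X V, OF wf V] \<U> by blast
  then obtain \<F> where "finite \<F>" "\<F> \<subseteq> \<U>" "V (Suc n) \<subseteq> \<Union>\<F>"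
    using way_below_opens_imp_finite_subcover[OF V(2)[of n]] \<U> by metis
  moreover have "\<Inter>(range V) \<subseteq> V (Suc n)"
    by blast
  ultimately show "\<exists>\<F>. finite \<F> \<and> \<F> \<subseteq> \<U> \<and> \<Inter>(range V) \<subseteq> \<Union>\<F>"
    by blast
qed

lemma locally_compact_if_core_compact:
  assumes wf: "well_filtered X" and cc: "core_compact X"
  shows "locally_compact_nb X"
  unfolding locally_compact_nb_def neighbourhood_base_of
proof (intro allI impI, elim conjE)
  fix U x assume U: "openin X U" "x \<in> U"
  interpret opens: continuous_preordered_set "{U. openin X U}" "(\<subseteq>)"
    by (rule continuous_preordered_set_opens[OF cc])
  have "is_sup_in {U. openin X U} (\<subseteq>) (opens.way_below_set U) U"
    using U(1) by (intro opens.is_sup_way_below_set) simp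
  moreover have "opens.way_below_set U \<subseteq> {U. openin X U}"
    unfolding opens.way_below_set_def by blast
  ultimately have "U = \<Union>(opens.way_below_set U)"
    using is_sup_in_opens_iff by blast
  then obtain W where W: "openin X W" "way_below_opens X W U" "x \<in> W"
    using U(2) unfolding opens.way_below_set_def by blast
  have "\<exists>B. openin X B \<and> way_below_opens X W B \<and> way_below_opens X B A"
    if "openin X A" "way_below_opens X W A" for A
    using opens.way_below_interpolation[of W A] that W(1) by auto
  then obtain g where g: "\<And>A. openin X A \<Longrightarrow> way_below_opens X W A \<Longrightarrow>
      openin X (g A) \<and> way_below_opens X W (g A) \<and> way_below_opens X (g A) A"
    by metis
  define V where "V n = (g ^^ n) U" for n
  have V: "openin X (V n) \<and> way_below_opens X W (V n)" for n
  proof (induction n)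
    case 0
    then show ?case
      using U(1) W(2) by (simp add: V_def)
  next
    case (Suc n)
    then show ?case
      using g[of "V n"] by (simp add: V_def)
  qed
  have "way_below_opens X (V (Suc n)) (V n)" for n
    using g[of "V n"] V[of n] by (simp add: V_def)
  then have "compactin X (\<Inter>(range V))"
    using compactin_Inter_way_below_chain[OF wf] V by blast
  moreover have "W \<subseteq> \<Inter>(range V)"
    using V way_below_opens_imp_subset by blast
  moreover have "\<Inter>(range V) \<subseteq> U"
    using INT_lower[of 0 UNIV V] by (simp add: V_def)
  ultimately show "\<exists>U' C. openin X U' \<and> compactin X C \<and> x \<in> U' \<and> U' \<subseteq> C \<and> C \<subseteq> U"
    using W by blast
qed

section \<open>The Scott space of a poset\<close>

lemma openin_Sigma_space: "openin (Sigma_space :: 'a::order topology) U \<longleftrightarrow> scott_open UNIV (\<le>) U"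
  by (simp add: Sigma_space_def)

lemma topspace_Sigma_space [simp]: "topspace (Sigma_space :: 'a::order topology) = UNIV"
proof -
  have "openin (Sigma_space :: 'a topology) UNIV"
    unfolding openin_Sigma_space scott_open_def directed_in_def by auto
  then show ?thesis
    by (metis openin_subset top.extremum_unique)
qed

lemma scott_open_not_le: "scott_open UNIV (\<le>) {z :: 'a::order. \<not> z \<le> y}"
  unfolding scott_open_def
proof (intro conjI allI impI ballI)
  fix D s assume D: "directed_in UNIV (\<le>) D \<and> is_sup_in UNIV (\<le>) D s \<and> s \<in> {z. \<not> z \<le> y}"
  show "D \<inter> {z. \<not> z \<le> y} \<noteq> {}"
  proof
    assume "D \<inter> {z. \<not> z \<le> y} = {}"
    then have "s \<le> y"
      using D unfolding is_sup_in_def by blast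
    with D show False
      by simp
  qed
qed (auto intro: order_trans)

lemma in_closure_of_singleton_Sigma_space:
  "x \<in> (Sigma_space :: 'a::order topology) closure_of {y} \<longleftrightarrow> x \<le> y"
proof
  assume "x \<in> Sigma_space closure_of {y}"
  then show "x \<le> y"
    using scott_open_not_le[of y] order_refl[of y]
    unfolding in_closure_of_singleton openin_Sigma_space by blast
next
  assume "x \<le> y"
  then show "x \<in> Sigma_space closure_of {y}"
    unfolding in_closure_of_singleton openin_Sigma_space scott_open_def by auto
qed

lemma saturation_singleton_Sigma_space: "saturation (Sigma_space :: 'a::order topology) {x} = {x..}"
  unfolding saturation_def by (auto simp: in_closure_of_singleton_Sigma_space)

lemma atLeast_in_KX: "{x..} \<in> KX (Sigma_space :: 'a::order topology)"
  using saturation_in_KX[of Sigma_space "{x}"] by (simp add: saturation_singleton_Sigma_space)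

lemma directed_KX_atLeast_image:
  assumes "directed_in UNIV (\<le>) D"
  shows "directed_in (KX Sigma_space) rev_incl ((\<lambda>d::'a::order. {d..}) ` D)"
  unfolding directed_in_def
proof (intro conjI ballI)
  show "(\<lambda>d. {d..}) ` D \<subseteq> KX Sigma_space"
    using atLeast_in_KX by blast
  show "(\<lambda>d. {d..}) ` D \<noteq> {}"
    using assms unfolding directed_in_def by blast
next
  fix A B assume "A \<in> (\<lambda>d. {d..}) ` D" "B \<in> (\<lambda>d. {d..}) ` D"
  then obtain a b where "a \<in> D" "b \<in> D" "A = {a..}" "B = {b..}"
    by blast
  moreover from this obtain c where "c \<in> D" "a \<le> c" "b \<le> c"
    using assms unfolding directed_in_def by blast
  ultimately show "\<exists>C\<in>(\<lambda>d. {d..}) ` D. rev_incl A C \<and> rev_incl B C"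
    unfolding rev_incl_def by (auto intro: order_trans)
qed

lemma is_sup_KX_atLeast_image:
  assumes "is_sup_in UNIV (\<le>) D s"
  shows "is_sup_in (KX Sigma_space) rev_incl ((\<lambda>d::'a::order. {d..}) ` D) {s..}"
  unfolding is_sup_in_def
proof (intro conjI ballI impI)
  fix A assume "A \<in> (\<lambda>d. {d..}) ` D"
  then obtain d where "d \<in> D" "A = {d..}"
    by blast
  moreover from this have "d \<le> s"
    using assms unfolding is_sup_in_def by blast
  ultimately show "rev_incl A {s..}"
    unfolding rev_incl_def by (auto intro: order_trans)
next
  fix M assume "\<forall>A\<in>(\<lambda>d. {d..}) ` D. rev_incl A M"
  then have "\<forall>d\<in>D. d \<le> y" if "y \<in> M" for y
    using that unfolding rev_incl_def by blast
  then show "rev_incl {s..} M"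
    using assms unfolding rev_incl_def is_sup_in_def by auto
qed (rule atLeast_in_KX)

lemma scott_open_way_below_atLeast:
  assumes cs: "continuous_semilattice_on (KX (Sigma_space :: 'a::order topology)) rev_incl"
    and L: "L \<in> KX (Sigma_space :: 'a topology)"
  shows "scott_open UNIV (\<le>) {y :: 'a. way_below_in (KX Sigma_space) rev_incl L {y..}}"
  unfolding scott_open_def
proof (intro conjI allI impI ballI)
  interpret KX: continuous_preordered_set "KX (Sigma_space :: 'a topology)" rev_incl
    by (rule continuous_preordered_set_KX[OF cs])
  fix y z :: 'a assume "y \<in> {y. way_below_in (KX Sigma_space) rev_incl L {y..}}" "y \<le> z"
  moreover have "rev_incl {y..} {z..}"
    using \<open>y \<le> z\<close> unfolding rev_incl_def by (auto intro: order_trans)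
  ultimately show "z \<in> {y. way_below_in (KX Sigma_space) rev_incl L {y..}}"
    using KX.way_below_le_trans atLeast_in_KX by blast
next
  interpret KX: continuous_preordered_set "KX (Sigma_space :: 'a topology)" rev_incl
    by (rule continuous_preordered_set_KX[OF cs])
  fix D s
  assume D: "directed_in UNIV (\<le>) D \<and> is_sup_in UNIV (\<le>) D s \<and>
    s \<in> {y. way_below_in (KX Sigma_space) rev_incl L {y..}}"
  then obtain M where M: "M \<in> KX Sigma_space" "way_below_in (KX Sigma_space) rev_incl L M"
    "way_below_in (KX Sigma_space) rev_incl M {s..}"
    using KX.way_below_interpolation[OF _ L atLeast_in_KX] by blast
  have "directed_in (KX Sigma_space) rev_incl ((\<lambda>d. {d..}) ` D)"
    using D by (intro directed_KX_atLeast_image) blast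
  moreover have "is_sup_in (KX Sigma_space) rev_incl ((\<lambda>d. {d..}) ` D) {s..}"
    using D by (intro is_sup_KX_atLeast_image) blast
  moreover have "rev_incl {s..} {s..}"
    by (simp add: rev_incl_def)
  ultimately have "\<exists>A\<in>(\<lambda>d. {d..}) ` D. rev_incl M A"
    using M(3) unfolding way_below_in_def by blast
  then obtain d where "d \<in> D" "rev_incl M {d..}"
    by blast
  then have "way_below_in (KX Sigma_space) rev_incl L {d..}"
    using KX.way_below_le_trans[OF M(2) _ M(1) atLeast_in_KX] by blast
  with \<open>d \<in> D\<close> show "D \<inter> {y. way_below_in (KX Sigma_space) rev_incl L {y..}} \<noteq> {}"
    by blast
qed simp

lemma locally_compact_if_continuous_semilattice_KX:
  assumes wf: "well_filtered (Sigma_space :: 'a::order topology)"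
    and cs: "continuous_semilattice_on (KX (Sigma_space :: 'a topology)) rev_incl"
  shows "locally_compact_nb (Sigma_space :: 'a topology)"
  unfolding locally_compact_nb_def neighbourhood_base_of
proof (intro allI impI, elim conjE)
  fix U and x :: 'a assume U: "openin Sigma_space U" "x \<in> U"
  interpret KX: continuous_preordered_set "KX (Sigma_space :: 'a topology)" rev_incl
    by (rule continuous_preordered_set_KX[OF cs])
  have "{x..} \<subseteq> U"
    using saturation_subset[OF saturated_in_openin[OF U(1)], of "{x}"] U(2)
    by (simp add: saturation_singleton_Sigma_space)
  then obtain L where L: "L \<in> KX Sigma_space" "way_below_in (KX Sigma_space) rev_incl L {x..}" "L \<subseteq> U"
    using directed_KX_sup_subset_openin[OF wf KX.directed_way_below_set KX.is_sup_way_below_set U(1)]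
      atLeast_in_KX unfolding KX.way_below_set_def by blast
  define N where "N = {y :: 'a. way_below_in (KX Sigma_space) rev_incl L {y..}}"
  have "openin Sigma_space N"
    unfolding N_def openin_Sigma_space by (rule scott_open_way_below_atLeast[OF cs L(1)])
  moreover have "x \<in> N"
    unfolding N_def using L(2) by blast
  moreover have "N \<subseteq> L"
  proof
    fix y assume "y \<in> N"
    then have "rev_incl L {y..}"
      unfolding N_def using KX.way_below_imp_le atLeast_in_KX by blast
    then show "y \<in> L"
      unfolding rev_incl_def by auto
  qed
  moreover have "compactin Sigma_space L"
    using L(1) unfolding KX_def by blast
  ultimately show "\<exists>N C. openin Sigma_space N \<and> compactin Sigma_space C \<and> x \<in> N \<and> N \<subseteq> C \<and> C \<subseteq> U"
    using L(3) by blast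
qed

theorem mainTheorem8:
  assumes "dcpo_on (UNIV :: ('a::order) set) (\<le>)"
    and "well_filtered (Sigma_space :: 'a topology)"
  shows "(locally_compact_nb (Sigma_space :: 'a topology) \<longleftrightarrow>
            continuous_semilattice_on (KX (Sigma_space :: 'a topology)) rev_incl \<and>
            upper_vietoris (Sigma_space :: 'a topology) =
              scott_topology (KX (Sigma_space :: 'a topology)) rev_incl)
       \<and> (locally_compact_nb (Sigma_space :: 'a topology) \<longleftrightarrow>
            continuous_semilattice_on (KX (Sigma_space :: 'a topology)) rev_incl \<and>
            property_Q (Sigma_space :: 'a topology))
       \<and> (locally_compact_nb (Sigma_space :: 'a topology) \<longleftrightarrow>
            continuous_semilattice_on (KX (Sigma_space :: 'a topology)) rev_incl)
       \<and> (locally_compact_nb (Sigma_space :: 'a topology) \<longleftrightarrow>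
            core_compact (Sigma_space :: 'a topology))"
proof -
  note wf = assms(2)
  have "locally_compact_nb (Sigma_space :: 'a topology) \<longleftrightarrow>
      continuous_semilattice_on (KX (Sigma_space :: 'a topology)) rev_incl"
    using continuous_semilattice_KX_if_locally_compact[OF wf]
      locally_compact_if_continuous_semilattice_KX[OF wf] by blast
  moreover have "locally_compact_nb (Sigma_space :: 'a topology) \<longleftrightarrow> core_compact (Sigma_space :: 'a topology)"
    using core_compact_if_locally_compact locally_compact_if_core_compact[OF wf] by blast
  ultimately show ?thesis
    using upper_vietoris_eq_scott_topology[OF wf] property_Q_if_locally_compact[OF wf] by blast
qed

end
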